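(* Assume $\phi$ satisfies (A2) and (A3) and that the gain matrix $V$ is irreducible. Then a point $q\in\mathcal F$ belongs to $\partial\mathcal F$ if and only if there exists a weight vector $w\in\mathbb R_{++}^K$ (i.e. $w>0$ entrywise) such that $q$ maximizes $x\mapsto w^Tx$ over $\mathcal F$.
   Context: Network model: $K\ge 2$ links, $\mathcal K=\{1,\dots,K\}$. Power vectors $p\in\mathbb R_+^K$. Power constraint set $\mathcal P=\{p\in\mathbb R_+^K: Cp\le\hat p\}$, where $C\in\{0,1\}^{N\times K}$ has at least one entry equal to $1$ in each column and $\hat p=(P_1,\dots,P_N)\in\mathbb R_{++}^N$; $\mathcal P_+=\mathcal P\cap\mathbb R_{++}^K$. Gain matrix $V=(v_{k,l})\in\mathbb R_+^{K\times K}$ with zero diagonal, noise vector $z\in\mathbb R_{++}^K$, and $\mathrm{SIR}_k(p)=p_k/((Vp)_k+z_k)$. SIR targets $\gamma_1,\dots,\gamma_K>0$. Assumption (A2): $\phi:\mathbb R_{++}\to\mathbb R$ is continuously differentiable and strictly increasing; let $\mathcal Q=\phi(\mathbb R_{++})$. Assumption (A3): the inverse function $\phi^{-1}:\mathcal Q\to\mathbb R_{++}$ is log-convex. Feasible QoS region: $\mathcal F=\{q\in\mathcal Q^K:\exists p\in\mathcal P_+ \text{ with } q_k=\phi(\mathrm{SIR}_k(p)/\gamma_k)\ \forall k\in\mathcal K\}$; for each $q\in\mathcal F$ the corresponding $p\in\mathcal P_+$ is unique. The boundary $\partial\mathcal F$ is defined as the set of $q\in\mathcal F$ whose corresponding power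 vector $p$ satisfies $Cp\le\hat p$ with equality in at least one component. *)

theory Defs
  imports "HOL-Analysis.Analysis"
begin

text \<open>Links are indexed by a finite type 'k (K = CARD('k)); power constraints by a
finite type 'n (N = CARD('n)). Vectors are elements of real^'k.\<close>

definition SIR :: "real^'k^'k \<Rightarrow> real^'k \<Rightarrow> 'k \<Rightarrow> real^'k \<Rightarrow> real" where
  "SIR V z k p = p$k / ((V *v p)$k + z$k)"

definition Pplus :: "real^'k^'n \<Rightarrow> real^'n \<Rightarrow> (real^'k) set" where
  "Pplus C phat = {p. (\<forall>k. p$k > 0) \<and> (\<forall>n. (C *v p)$n \<le> phat$n)}"

definition qos :: "(real \<Rightarrow> real) \<Rightarrow> real^'k^'k \<Rightarrow> real^'k \<Rightarrow> real^'k \<Rightarrow> real^'k \<Rightarrow> real^'k" where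
  "qos \<phi> V z \<gamma> p = (\<chi> k. \<phi> (SIR V z k p / \<gamma>$k))"

definition feasible_region ::
  "(real \<Rightarrow> real) \<Rightarrow> real^'k^'n \<Rightarrow> real^'n \<Rightarrow> real^'k^'k \<Rightarrow> real^'k \<Rightarrow> real^'k \<Rightarrow> (real^'k) set" where
  "feasible_region \<phi> C phat V z \<gamma> = {q. \<exists>p\<in>Pplus C phat. q = qos \<phi> V z \<gamma> p}"

definition feasible_boundary ::
  "(real \<Rightarrow> real) \<Rightarrow> real^'k^'n \<Rightarrow> real^'n \<Rightarrow> real^'k^'k \<Rightarrow> real^'k \<Rightarrow> real^'k \<Rightarrow> (real^'k) set" where
  "feasible_boundary \<phi> C phat V z \<gamma> =
     {q. \<exists>p\<in>Pplus C phat. q = qos \<phi> V z \<gamma> p \<and> (\<exists>n. (C *v p)$n = phat$n)}"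

definition irreducible_matrix :: "real^'k^'k \<Rightarrow> bool" where
  "irreducible_matrix V \<longleftrightarrow> (\<forall>k l. (k, l) \<in> {(i, j). V$i$j > 0}\<^sup>+)"

definition A2 :: "(real \<Rightarrow> real) \<Rightarrow> bool" where
  "A2 \<phi> \<longleftrightarrow> (\<exists>\<phi>'. (\<forall>x>0. (\<phi> has_real_derivative \<phi>' x) (at x)) \<and> continuous_on {0<..} \<phi>')
            \<and> strict_mono_on {0<..} \<phi>"

definition A3 :: "(real \<Rightarrow> real) \<Rightarrow> bool" where
  "A3 \<phi> \<longleftrightarrow> convex_on (\<phi> ` {0<..}) (\<lambda>x. ln (the_inv_into {0<..} \<phi> x))"

end

theory Submission
  imports Defs
begin

(* "If": if q = qos p maximises w \<bullet> x with w > 0 but no power constraint is tight,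
   then scaling p by a factor t > 1 stays feasible and raises every SIR, hence
   every QoS component, contradicting maximality.

   "Only if": let the constraint n0 be tight at p0.  Writing u = ln \<circ> \<phi>\<inverse>, which is
   convex by (A3) and increasing, each u has a positive supporting slope c_k at
   q_k, so c_k (x_k - q_k) \<le> ln SIR_k(p') - ln SIR_k(p0).  Log-convexity of the
   interference bounds ln SIR_k(p') - ln SIR_k(p0) by y_k - \<Sum>_l B_kl y_l,
   where y = ln (p'/p0) and B_kl = V_kl p0_l / I_k(p0) is a substochastic matrix
   that is irreducible together with V.  Solving \<alpha>(I - B) = (C_n0l p0_l)_l with
   \<alpha> > 0 (a Perron-type fact for irreducible substochastic matrices) and taking
   w_k = \<alpha>_k c_k collapses the weighted sum to \<Sum>_l C_n0l p0_l y_l \<le> (Cp')_n0 -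
   (Cp0)_n0 \<le> 0. *)


section \<open>Supporting slopes of convex functions\<close>

lemma convex_on_secant_slopes_mono:
  fixes u :: "real \<Rightarrow> real"
  assumes "convex_on Q u" "y \<in> Q" "x \<in> Q" "y < t" "t < x"
  shows "(u t - u y) / (t - y) \<le> (u x - u t) / (x - t)"
proof -
  have 1: "(u y - u t) / (y - t) \<le> (u y - u x) / (y - x)"
   and 2: "(u y - u x) / (y - x) \<le> (u t - u x) / (t - x)"
    using convex_on_slope_le[OF assms] by auto
  have "(u t - u y) / (t - y) = (u y - u t) / (y - t)"
    and "(u x - u t) / (x - t) = (u t - u x) / (t - x)"
    by (metis minus_diff_eq minus_divide_divide)+
  with 1 2 show ?thesis by linarith
qed

text \<open>A convex function that strictly increases on the left of an interior point
  q0 of its domain has a strictly positive supporting slope at q0: the supremum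
  of the left secant slopes.\<close>
lemma convex_on_positive_support_slope:
  fixes u :: "real \<Rightarrow> real"
  assumes cv: "convex_on Q u" and aQ: "a \<in> Q" and bQ: "b \<in> Q" and q0Q: "q0 \<in> Q"
    and aq: "a < q0" and qb: "q0 < b" and ua: "u a < u q0"
  shows "\<exists>c>0. \<forall>x\<in>Q. u q0 + c * (x - q0) \<le> u x"
proof -
  define S where "S = {(u q0 - u y) / (q0 - y) | y. y \<in> Q \<and> y < q0}"
  have aS: "(u q0 - u a) / (q0 - a) \<in> S" using aQ aq unfolding S_def by auto
  have right_slopes: "s \<le> (u x - u q0) / (x - q0)" if "s \<in> S" "x \<in> Q" "q0 < x" for s x
    using that convex_on_secant_slopes_mono[OF cv _ that(2) _ that(3)] unfolding S_def by auto
  have bdd: "bdd_above S" using right_slopes[OF _ bQ qb] by (intro bdd_aboveI) auto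
  define c where "c = Sup S"
  have "0 < (u q0 - u a) / (q0 - a)" using ua aq by simp
  also have "\<dots> \<le> c" unfolding c_def using cSup_upper[OF aS bdd] .
  finally have cpos: "c > 0" .
  have "u q0 + c * (x - q0) \<le> u x" if xQ: "x \<in> Q" for x
  proof (cases x q0 rule: linorder_cases)
    case less
    have "(u q0 - u x) / (q0 - x) \<le> c"
      unfolding c_def using xQ less by (intro cSup_upper[OF _ bdd]) (auto simp: S_def)
    with less show ?thesis by (simp add: divide_le_eq algebra_simps)
  next
    case greater
    have "c \<le> (u x - u q0) / (x - q0)" unfolding c_def
      using aS right_slopes xQ greater by (intro cSup_least) auto
    with greater show ?thesis by (simp add: le_divide_eq)
  qed simp
  with cpos show ?thesis by blast
qed

lemma A3_positive_support_slope:
  fixes \<phi> :: "real \<Rightarrow> real"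
  assumes sm: "strict_mono_on {0<..} \<phi>" and A3: "A3 \<phi>" and s: "s > 0"
  shows "\<exists>c>0. \<forall>t>0. c * (\<phi> t - \<phi> s) \<le> ln t - ln s"
proof -
  define Q where "Q = \<phi> ` {0<..}"
  define u where "u x = ln (the_inv_into {0<..} \<phi> x)" for x
  have cvx: "convex_on Q u" using A3 unfolding A3_def Q_def u_def by simp
  have u_phi: "u (\<phi> t) = ln t" if "t > 0" for t
    unfolding u_def using the_inv_into_f_f[OF strict_mono_on_imp_inj_on[OF sm]] that by simp
  have "\<exists>c>0. \<forall>x\<in>Q. u (\<phi> s) + c * (x - \<phi> s) \<le> u x"
  proof (rule convex_on_positive_support_slope[OF cvx])
    show "\<phi> (s / 2) \<in> Q" "\<phi> (2 * s) \<in> Q" "\<phi> s \<in> Q" unfolding Q_def using s by auto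
    show "\<phi> (s / 2) < \<phi> s" "\<phi> s < \<phi> (2 * s)" using s by (auto intro: strict_mono_onD[OF sm])
    show "u (\<phi> (s / 2)) < u (\<phi> s)" using s by (simp add: u_phi)
  qed
  then obtain c where "c > 0" and c: "\<forall>x\<in>Q. u (\<phi> s) + c * (x - \<phi> s) \<le> u x" by blast
  have "c * (\<phi> t - \<phi> s) \<le> ln t - ln s" if "t > 0" for t
    using c[rule_format, of "\<phi> t"] that s by (simp add: Q_def u_phi)
  with \<open>c > 0\<close> show ?thesis by blast
qed

section \<open>Log-convexity of the interference\<close>

text \<open>Jensen-type bound behind the log-convexity of \<open>\<Sum>_l v_l e^(x_l) + z\<close>: the
  logarithmic change of an interference term dominates the average of the
  logarithmic power changes, weighted by the shares v_l p_l / I of the total.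
  Proved from \<open>exp y \<ge> exp c (1 + y - c)\<close> at the weighted mean c.\<close>
lemma ln_interference_ratio_lower:
  fixes v p p' :: "'k::finite \<Rightarrow> real"
  assumes v: "\<forall>l. v l \<ge> 0" and p: "\<forall>l. p l > 0" and p': "\<forall>l. p' l > 0" and zk: "zk > 0"
  shows "(\<Sum>l\<in>UNIV. v l * p l * ln (p' l / p l)) / ((\<Sum>l\<in>UNIV. v l * p l) + zk)
           \<le> ln (((\<Sum>l\<in>UNIV. v l * p' l) + zk) / ((\<Sum>l\<in>UNIV. v l * p l) + zk))"
proof -
  define W where "W = (\<Sum>l\<in>UNIV. v l * p l)"
  define I where "I = W + zk"
  define y where "y l = ln (p' l / p l)" for l
  define c where "c = (\<Sum>l\<in>UNIV. v l * p l * y l) / I"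
  have W0: "W \<ge> 0" unfolding W_def using v p by (intro sum_nonneg) (simp add: less_imp_le)
  have Ipos: "I > 0" using W0 zk unfolding I_def by linarith
  have p'_exp: "p' l = p l * exp (y l)" for l
    using p[rule_format, of l] p'[rule_format, of l] unfolding y_def by simp
  have tangent: "exp c * (1 + (x - c)) \<le> exp x" for x
  proof -
    have "exp c * (1 + (x - c)) \<le> exp c * exp (x - c)"
      using exp_ge_add_one_self[of "x - c"] by simp
    thus ?thesis by (simp add: exp_diff)
  qed
  have sum_y: "(\<Sum>l\<in>UNIV. v l * p l * y l) = c * I" unfolding c_def using Ipos by simp
  have "exp c * (W + c * I - c * W)
      = exp c * (W + (\<Sum>l\<in>UNIV. v l * p l * y l) - c * W)" by (simp add: sum_y)
  also have "\<dots> = (\<Sum>l\<in>UNIV. v l * p l * (exp c * (1 + (y l - c))))"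
    by (simp add: W_def algebra_simps sum.distrib sum_distrib_left sum_subtractf)
  also have "\<dots> \<le> (\<Sum>l\<in>UNIV. v l * p l * exp (y l))"
    using v p by (intro sum_mono mult_left_mono[OF tangent]) (simp add: less_imp_le)
  also have "\<dots> = (\<Sum>l\<in>UNIV. v l * p' l)" by (simp add: p'_exp mult.assoc)
  finally have interf: "exp c * (W + c * I - c * W) \<le> (\<Sum>l\<in>UNIV. v l * p' l)" .
  have "zk * (exp c * (1 - c)) \<le> zk * 1"
    using zk tangent[of 0] by (intro mult_left_mono) auto
  hence "exp c * I \<le> exp c * (W + c * I - c * W) + zk"
    unfolding I_def by (simp add: algebra_simps)
  with interf have "exp c * I \<le> (\<Sum>l\<in>UNIV. v l * p' l) + zk" by linarith
  hence "exp c \<le> ((\<Sum>l\<in>UNIV. v l * p' l) + zk) / I" using Ipos by (simp add: le_divide_eq)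
  hence "c \<le> ln (((\<Sum>l\<in>UNIV. v l * p' l) + zk) / I)"
    by (metis exp_gt_zero ln_exp ln_le_cancel_iff order_less_le_trans)
  thus ?thesis unfolding c_def I_def W_def y_def .
qed


section \<open>Linear systems with substochastic matrices\<close>

text \<open>Throughout, B is a nonnegative matrix with all row sums below 1, and we
  consider the left system x (I - B) = d, i.e. \<open>x j - \<Sum>_k x k B k j = d j\<close>.\<close>

text \<open>A nonnegative vector that is subinvariant for B must vanish: summing
  m \<le> m B over all columns gives \<open>\<Sum>_k m k (1 - \<Sum>_j B k j) \<le> 0\<close>.\<close>
lemma substochastic_subinvariant_zero:
  fixes B :: "'k::finite \<Rightarrow> 'k \<Rightarrow> real" and m :: "'k \<Rightarrow> real"
  assumes rs: "\<forall>k. (\<Sum>j\<in>UNIV. B k j) < 1"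
    and m0: "\<forall>j. m j \<ge> 0" and sub: "\<forall>j. m j \<le> (\<Sum>k\<in>UNIV. m k * B k j)"
  shows "m j = 0"
proof -
  have "(\<Sum>j\<in>UNIV. m j) \<le> (\<Sum>j\<in>UNIV. \<Sum>k\<in>UNIV. m k * B k j)"
    using sub by (intro sum_mono) auto
  also have "\<dots> = (\<Sum>k\<in>UNIV. m k * (\<Sum>j\<in>UNIV. B k j))"
    by (subst sum.swap) (simp add: sum_distrib_left)
  finally have "(\<Sum>k\<in>UNIV. m k * (1 - (\<Sum>j\<in>UNIV. B k j))) \<le> 0"
    by (simp add: algebra_simps sum_subtractf)
  moreover have "\<forall>k. m k * (1 - (\<Sum>j\<in>UNIV. B k j)) \<ge> 0" using m0 rs by (simp add: less_imp_le)
  ultimately have "\<forall>k\<in>UNIV. m k * (1 - (\<Sum>j\<in>UNIV. B k j)) = 0"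
    by (subst sum_nonneg_eq_0_iff[symmetric]) (auto intro: order_antisym sum_nonneg)
  thus ?thesis using rs by (metis UNIV_I diff_gt_0_iff_gt mult_eq_0_iff order_less_irrefl)
qed

text \<open>The map x \<mapsto> x (I - B) is injective (a kernel vector x satisfies
  |x| \<le> |x| B), hence surjective: the system is solvable for every d.\<close>
lemma substochastic_left_system_solvable:
  fixes B :: "'k::finite \<Rightarrow> 'k \<Rightarrow> real" and d :: "'k \<Rightarrow> real"
  assumes B0: "\<forall>k j. B k j \<ge> 0" and rs: "\<forall>k. (\<Sum>j\<in>UNIV. B k j) < 1"
  shows "\<exists>x. \<forall>j. x j - (\<Sum>k\<in>UNIV. x k * B k j) = d j"
proof -
  define f :: "real^'k \<Rightarrow> real^'k" where "f x = (\<chi> j. x$j - (\<Sum>k\<in>UNIV. x$k * B k j))" for x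
  have lin: "linear f"
  proof (rule linearI)
    show "f (x + y) = f x + f y" for x y
      unfolding f_def by (simp add: vec_eq_iff sum.distrib distrib_right)
    show "f (c *\<^sub>R x) = c *\<^sub>R f x" for c x
      unfolding f_def by (simp add: vec_eq_iff sum_distrib_left right_diff_distrib mult.assoc)
  qed
  have inj: "inj f"
  proof (rule linear_injective_0[OF lin, THEN iffD2], intro allI impI)
    fix x assume "f x = 0"
    hence "(f x)$j = 0" for j by simp
    hence fixed: "x$j = (\<Sum>k\<in>UNIV. x$k * B k j)" for j
      unfolding f_def vec_lambda_beta by (metis eq_iff_diff_eq_0)
    have "\<forall>j. \<bar>x$j\<bar> \<le> (\<Sum>k\<in>UNIV. \<bar>x$k\<bar> * B k j)"
    proof
      fix j
      have "\<bar>x$j\<bar> \<le> (\<Sum>k\<in>UNIV. \<bar>x$k * B k j\<bar>)" by (subst fixed) (rule sum_abs)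
      also have "\<dots> = (\<Sum>k\<in>UNIV. \<bar>x$k\<bar> * B k j)" using B0 by (simp add: abs_mult)
      finally show "\<bar>x$j\<bar> \<le> (\<Sum>k\<in>UNIV. \<bar>x$k\<bar> * B k j)" .
    qed
    hence "\<bar>x$j\<bar> = 0" for j
      by (intro substochastic_subinvariant_zero[OF rs, of "\<lambda>j. \<bar>x$j\<bar>"]) simp_all
    thus "x = 0" by (simp add: vec_eq_iff)
  qed
  have "surj f" by (rule linear_injective_imp_surjective[OF lin inj]) (rule refl)
  then obtain x where "f x = (\<chi> j. d j)" by (metis surjE)
  hence "x$j - (\<Sum>k\<in>UNIV. x$k * B k j) = d j" for j by (simp add: f_def vec_eq_iff)
  thus ?thesis by (intro exI[of _ "\<lambda>j. x$j"]) simp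
qed

text \<open>For d \<ge> 0 every solution is nonnegative: its negative part is subinvariant.\<close>
lemma substochastic_left_solution_nonneg:
  fixes B :: "'k::finite \<Rightarrow> 'k \<Rightarrow> real" and d x :: "'k \<Rightarrow> real"
  assumes B0: "\<forall>k j. B k j \<ge> 0" and rs: "\<forall>k. (\<Sum>j\<in>UNIV. B k j) < 1"
    and d0: "\<forall>j. d j \<ge> 0" and sol: "\<forall>j. x j - (\<Sum>k\<in>UNIV. x k * B k j) = d j"
  shows "x j \<ge> 0"
proof -
  define m where "m j = max 0 (- x j)" for j
  have "m j \<le> (\<Sum>k\<in>UNIV. m k * B k j)" for j
  proof -
    have "- x j = (\<Sum>k\<in>UNIV. (- x k) * B k j) - d j"
      using sol[rule_format, of j] by (simp add: sum_negf)
    also have "\<dots> \<le> (\<Sum>k\<in>UNIV. (- x k) * B k j)" using d0 by simp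
    also have "\<dots> \<le> (\<Sum>k\<in>UNIV. m k * B k j)"
      using B0 by (intro sum_mono mult_right_mono) (auto simp: m_def)
    finally show ?thesis
      unfolding m_def using B0 by (simp add: sum_nonneg)
  qed
  hence "m j = 0" using substochastic_subinvariant_zero[OF rs, of m] by (simp add: m_def)
  thus ?thesis by (simp add: m_def)
qed

text \<open>If moreover d \<noteq> 0 and B is irreducible, the solution is strictly positive:
  a zero entry x j forces x k = 0 along every edge k \<rightarrow> j, hence everywhere by
  strong connectivity, which contradicts d \<noteq> 0.\<close>
lemma irreducible_left_solution_pos:
  fixes B :: "'k::finite \<Rightarrow> 'k \<Rightarrow> real" and d x :: "'k \<Rightarrow> real"
  assumes B0: "\<forall>k j. B k j \<ge> 0" and d0: "\<forall>j. d j \<ge> 0" and dpos: "\<exists>j. d j > 0"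
    and irr: "\<forall>k l. (k, l) \<in> {(i, j). B i j > 0}\<^sup>+"
    and x0: "\<forall>j. x j \<ge> 0" and sol: "\<forall>j. x j - (\<Sum>k\<in>UNIV. x k * B k j) = d j"
  shows "x j > 0"
proof (rule ccontr)
  assume "\<not> x j > 0"
  with x0[rule_format, of j] have xj: "x j = 0" by linarith
  have zero_propagates: "x k = 0" if "x l = 0" "B k l > 0" for k l
  proof -
    have "(\<Sum>k\<in>UNIV. x k * B k l) + d l = 0" using sol that(1) by (metis add.commute diff_eq_eq)
    moreover have "(\<Sum>k\<in>UNIV. x k * B k l) \<ge> 0" using x0 B0 by (intro sum_nonneg) simp
    ultimately have "(\<Sum>k\<in>UNIV. x k * B k l) = 0" using d0 by (smt (verit))
    hence "x k * B k l = 0" using x0 B0 sum_nonneg_eq_0_iff[of UNIV "\<lambda>k. x k * B k l"] by simp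
    thus ?thesis using that by simp
  qed
  have all_zero: "x k = 0" for k
  proof -
    have "(k, j) \<in> {(i, j). B i j > 0}\<^sup>+" using irr by blast
    thus ?thesis
      by (induction rule: converse_trancl_induct) (use zero_propagates xj in auto)
  qed
  obtain l where "d l > 0" using dpos by blast
  with sol all_zero show False by simp
qed

lemma irreducible_substochastic_left_solution:
  fixes B :: "'k::finite \<Rightarrow> 'k \<Rightarrow> real" and d :: "'k \<Rightarrow> real"
  assumes B0: "\<forall>k j. B k j \<ge> 0" and rs: "\<forall>k. (\<Sum>j\<in>UNIV. B k j) < 1"
    and d0: "\<forall>j. d j \<ge> 0" and dpos: "\<exists>j. d j > 0"
    and irr: "\<forall>k l. (k, l) \<in> {(i, j). B i j > 0}\<^sup>+"
  shows "\<exists>x. (\<forall>j. x j > 0) \<and> (\<forall>j. x j - (\<Sum>k\<in>UNIV. x k * B k j) = d j)"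
proof -
  obtain x where sol: "\<forall>j. x j - (\<Sum>k\<in>UNIV. x k * B k j) = d j"
    using substochastic_left_system_solvable[OF B0 rs] by blast
  have "\<forall>j. x j \<ge> 0" using substochastic_left_solution_nonneg[OF B0 rs d0 sol] by blast
  with sol show ?thesis using irreducible_left_solution_pos[OF B0 d0 dpos irr] by blast
qed

section \<open>Signal-to-interference ratios\<close>

lemma matrix_vector_mult_nth: "((A::real^'k^'n) *v x)$i = (\<Sum>j\<in>UNIV. A$i$j * x$j)"
  by (simp add: matrix_vector_mult_def)

lemma interference_nonneg:
  fixes V :: "real^'k^'k" and p :: "real^'k"
  assumes "\<forall>k l. V$k$l \<ge> 0" "\<forall>k. p$k > 0"
  shows "(V *v p)$k \<ge> 0"
  unfolding matrix_vector_mult_nth using assms by (intro sum_nonneg) (simp add: less_imp_le)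

lemma interference_plus_noise_pos:
  fixes V :: "real^'k^'k" and p z :: "real^'k"
  assumes "\<forall>k l. V$k$l \<ge> 0" "\<forall>k. p$k > 0" "\<forall>k. z$k > 0"
  shows "(V *v p)$k + z$k > 0"
  using interference_nonneg[OF assms(1,2), of k] assms(3) by (simp add: add_nonneg_pos)

lemma SIR_pos:
  fixes V :: "real^'k^'k" and p z :: "real^'k"
  assumes "\<forall>k l. V$k$l \<ge> 0" "\<forall>k. p$k > 0" "\<forall>k. z$k > 0"
  shows "SIR V z k p > 0"
  unfolding SIR_def using interference_plus_noise_pos[OF assms] assms(2) by simp

text \<open>Scaling all powers up by t > 1 strictly increases every SIR, because the
  noise is not scaled.\<close>
lemma SIR_scale_gt:
  fixes V :: "real^'k^'k" and p z :: "real^'k"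
  assumes V_nonneg: "\<forall>k l. V$k$l \<ge> 0" and p: "\<forall>k. p$k > 0" and z: "\<forall>k. z$k > 0"
    and t: "t > 1"
  shows "SIR V z k (t *\<^sub>R p) > SIR V z k p"
proof -
  have Vp: "(V *v p)$k \<ge> 0" by (rule interference_nonneg[OF V_nonneg p])
  have pk: "p$k > 0" and zk: "z$k > 0" using p z by auto
  have D1: "(V *v p)$k + z$k > 0" and D2: "t * (V *v p)$k + z$k > 0"
    using Vp zk t by (auto intro: add_nonneg_pos)
  have "p$k * (t * (V *v p)$k + z$k) < t * p$k * ((V *v p)$k + z$k)"
    using pk zk t by (simp add: algebra_simps)
  hence "p$k / ((V *v p)$k + z$k) < t * p$k / (t * (V *v p)$k + z$k)"
    using D1 D2 by (simp add: field_simps)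
  thus ?thesis unfolding SIR_def by (simp add: matrix_vector_mult_scaleR)
qed

lemma slack_power_scalable:
  fixes C :: "real^'k^'n" and phat :: "real^'n" and p :: "real^'k"
  assumes C_nonneg: "\<forall>i j. C$i$j \<ge> 0" and pP: "p \<in> Pplus C phat"
    and slack: "\<forall>n. (C *v p)$n < phat$n"
  shows "\<exists>t>1. t *\<^sub>R p \<in> Pplus C phat"
proof -
  have ppos: "\<forall>k. p$k > 0" using pP by (simp add: Pplus_def)
  have Cp0: "(C *v p)$n \<ge> 0" for n
    unfolding matrix_vector_mult_nth using C_nonneg ppos by (intro sum_nonneg) (simp add: less_imp_le)
  have hpos: "phat$n > 0" for n using Cp0[of n] slack by (meson le_less_trans)
  define r where "r n = (C *v p)$n / phat$n" for n
  define m where "m = Max (range r)"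
  have rle: "r n \<le> m" for n unfolding m_def by simp
  have "m \<in> range r" unfolding m_def by (rule Max_in) auto
  then obtain n1 where "m = r n1" by blast
  hence m1: "m < 1" and m0: "m \<ge> 0"
    using slack hpos[of n1] Cp0[of n1] unfolding r_def by (auto simp: divide_less_eq)
  define t where "t = 2 / (1 + m)"
  have t1: "t > 1" and tm: "t * m \<le> 1" unfolding t_def using m1 m0 by (simp_all add: field_simps)
  have "(C *v (t *\<^sub>R p))$n \<le> phat$n" for n
  proof -
    have "(C *v (t *\<^sub>R p))$n = t * (r n * phat$n)"
      unfolding r_def using hpos[of n] by (simp add: matrix_vector_mult_scaleR)
    also have "\<dots> \<le> (t * m) * phat$n" using rle[of n] hpos[of n] t1 by simp
    also have "\<dots> \<le> phat$n" using tm hpos[of n] by (simp add: mult_left_le_one_le)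
    finally show ?thesis .
  qed
  moreover have "\<forall>k. (t *\<^sub>R p)$k > 0" using ppos t1 by simp
  ultimately show ?thesis using t1 unfolding Pplus_def by blast
qed


text \<open>If-direction: were no constraint tight at p, the scaled vector t p (t > 1)
  would be feasible with strictly larger QoS in every component.\<close>
theorem weighted_maximiser_on_boundary:
  fixes \<phi> :: "real \<Rightarrow> real"
    and C :: "real^'k^'n" and phat :: "real^'n"
    and V :: "real^'k^'k" and z \<gamma> q w :: "real^'k"
  assumes C_nonneg: "\<forall>i j. C$i$j \<ge> 0"
    and V_nonneg: "\<forall>k l. V$k$l \<ge> 0"
    and z_pos: "\<forall>k. z$k > 0"
    and \<gamma>_pos: "\<forall>k. \<gamma>$k > 0"
    and sm: "strict_mono_on {0<..} \<phi>"
    and pP: "p \<in> Pplus C phat" and qd: "q = qos \<phi> V z \<gamma> p"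
    and wpos: "\<forall>k. w$k > 0"
    and wmax: "\<forall>x \<in> feasible_region \<phi> C phat V z \<gamma>. w \<bullet> x \<le> w \<bullet> q"
  shows "q \<in> feasible_boundary \<phi> C phat V z \<gamma>"
proof (rule ccontr)
  assume "q \<notin> feasible_boundary \<phi> C phat V z \<gamma>"
  hence "(C *v p)$n \<noteq> phat$n" for n using pP qd unfolding feasible_boundary_def by blast
  hence "\<forall>n. (C *v p)$n < phat$n" using pP by (auto simp: Pplus_def order_less_le)
  then obtain t where t1: "t > 1" and tP: "t *\<^sub>R p \<in> Pplus C phat"
    using slack_power_scalable[OF C_nonneg pP] by blast
  have ppos: "\<forall>k. p$k > 0" using pP by (simp add: Pplus_def)
  have "q$k < (qos \<phi> V z \<gamma> (t *\<^sub>R p))$k" for k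
  proof -
    have s: "SIR V z k p / \<gamma>$k < SIR V z k (t *\<^sub>R p) / \<gamma>$k"
      using SIR_scale_gt[OF V_nonneg ppos z_pos t1] \<gamma>_pos by (simp add: divide_strict_right_mono)
    moreover have "SIR V z k p / \<gamma>$k > 0" using SIR_pos[OF V_nonneg ppos z_pos] \<gamma>_pos by simp
    ultimately show ?thesis unfolding qd qos_def by (simp add: strict_mono_onD[OF sm])
  qed
  hence "w \<bullet> q < w \<bullet> qos \<phi> V z \<gamma> (t *\<^sub>R p)"
    unfolding inner_vec_def using wpos by (intro sum_strict_mono) auto
  moreover have "qos \<phi> V z \<gamma> (t *\<^sub>R p) \<in> feasible_region \<phi> C phat V z \<gamma>"
    unfolding feasible_region_def using tP by blast
  ultimately show False using wmax by fastforce
qed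

definition interference_share :: "real^'k^'k \<Rightarrow> real^'k \<Rightarrow> real^'k \<Rightarrow> 'k \<Rightarrow> 'k \<Rightarrow> real" where
  "interference_share V z p k l = V$k$l * p$l / ((V *v p)$k + z$k)"

lemma interference_share_substochastic:
  fixes V :: "real^'k^'k" and p z :: "real^'k"
  assumes V_nonneg: "\<forall>k l. V$k$l \<ge> 0" and p: "\<forall>k. p$k > 0" and z: "\<forall>k. z$k > 0"
  shows "interference_share V z p k l \<ge> 0"
    and "(\<Sum>l\<in>UNIV. interference_share V z p k l) < 1"
    and "interference_share V z p k l > 0 \<longleftrightarrow> V$k$l > 0"
proof -
  have I: "(V *v p)$k + z$k > 0" by (rule interference_plus_noise_pos[OF assms])
  show "interference_share V z p k l \<ge> 0"
    unfolding interference_share_def using V_nonneg p I by (simp add: less_imp_le)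
  have "(\<Sum>l\<in>UNIV. interference_share V z p k l) = (V *v p)$k / ((V *v p)$k + z$k)"
    unfolding interference_share_def matrix_vector_mult_nth by (simp add: sum_divide_distrib)
  also have "\<dots> < 1" using I z by (simp add: divide_less_eq)
  finally show "(\<Sum>l\<in>UNIV. interference_share V z p k l) < 1" .
  show "interference_share V z p k l > 0 \<longleftrightarrow> V$k$l > 0"
    unfolding interference_share_def using I p[rule_format, of l]
    by (simp add: zero_less_divide_iff zero_less_mult_iff)
qed

lemma ln_SIR_change_le:
  fixes V :: "real^'k^'k" and p p' z :: "real^'k"
  assumes V_nonneg: "\<forall>k l. V$k$l \<ge> 0" and p: "\<forall>k. p$k > 0" and p': "\<forall>k. p'$k > 0"
    and z: "\<forall>k. z$k > 0"
  shows "ln (SIR V z k p') - ln (SIR V z k p)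
           \<le> ln (p'$k / p$k) - (\<Sum>l\<in>UNIV. interference_share V z p k l * ln (p'$l / p$l))"
proof -
  define I where "I = (V *v p)$k + z$k"
  define I' where "I' = (V *v p')$k + z$k"
  have Ipos: "I > 0" and I'pos: "I' > 0"
    unfolding I_def I'_def using interference_plus_noise_pos[OF V_nonneg _ z] p p' by auto
  have "(\<Sum>l\<in>UNIV. interference_share V z p k l * ln (p'$l / p$l))
        = (\<Sum>l\<in>UNIV. V$k$l * p$l * ln (p'$l / p$l)) / I"
    unfolding interference_share_def I_def by (simp add: sum_divide_distrib)
  also have "\<dots> \<le> ln (I' / I)"
    unfolding I_def I'_def matrix_vector_mult_nth
    by (rule ln_interference_ratio_lower) (use V_nonneg p p' z in auto)
  also have "\<dots> = ln I' - ln I" using Ipos I'pos by (simp add: ln_divide_pos)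
  finally have "(\<Sum>l\<in>UNIV. interference_share V z p k l * ln (p'$l / p$l)) \<le> ln I' - ln I" .
  moreover have "ln (SIR V z k p') = ln (p'$k) - ln I'" "ln (SIR V z k p) = ln (p$k) - ln I"
    "ln (p'$k / p$k) = ln (p'$k) - ln (p$k)"
    unfolding SIR_def I_def[symmetric] I'_def[symmetric] using p p' Ipos I'pos
    by (simp_all add: ln_divide_pos)
  ultimately show ?thesis by linarith
qed

lemma tight_constraint_dual_weights:
  fixes C :: "real^'k^'n" and phat :: "real^'n"
    and V :: "real^'k^'k" and z p0 :: "real^'k"
  assumes C_nonneg: "\<forall>i j. C$i$j \<ge> 0" and phat_pos: "phat$n0 > 0"
    and V_nonneg: "\<forall>k l. V$k$l \<ge> 0" and V_irr: "irreducible_matrix V"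
    and z_pos: "\<forall>k. z$k > 0" and p0pos: "\<forall>k. p0$k > 0"
    and tight: "(C *v p0)$n0 = phat$n0"
  shows "\<exists>\<alpha>. (\<forall>j. \<alpha> j > 0) \<and>
           (\<forall>j. \<alpha> j - (\<Sum>k\<in>UNIV. \<alpha> k * interference_share V z p0 k j) = C$n0$j * p0$j)"
proof (rule irreducible_substochastic_left_solution)
  note share = interference_share_substochastic[OF V_nonneg p0pos z_pos]
  show "\<forall>k j. interference_share V z p0 k j \<ge> 0" "\<forall>k. (\<Sum>j\<in>UNIV. interference_share V z p0 k j) < 1"
    using share(1,2) by blast+
  show "\<forall>j. C$n0$j * p0$j \<ge> 0" using C_nonneg p0pos by (simp add: less_imp_le)
  show "\<exists>j. C$n0$j * p0$j > 0"
  proof (rule ccontr)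
    assume "\<nexists>j. C$n0$j * p0$j > 0"
    hence "(\<Sum>j\<in>UNIV. C$n0$j * p0$j) \<le> 0" by (simp add: sum_nonpos not_less)
    with tight phat_pos show False by (simp add: matrix_vector_mult_nth)
  qed
  show "\<forall>k l. (k, l) \<in> {(i, j). interference_share V z p0 i j > 0}\<^sup>+"
    using V_irr unfolding irreducible_matrix_def share(3) .
qed

text \<open>The weighted sum telescopes to \<open>\<Sum>_l C_n0l p0_l ln (p'_l/p0_l)\<close>,
  which is at most \<open>(C p')_n0 - (C p0)_n0 \<le> 0\<close> by ln x \<le> x - 1.\<close>
lemma weighted_ln_SIR_change_nonpos:
  fixes C :: "real^'k^'n" and phat :: "real^'n"
    and V :: "real^'k^'k" and z p0 p' :: "real^'k" and \<alpha> :: "'k \<Rightarrow> real"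
  assumes C_nonneg: "\<forall>i j. C$i$j \<ge> 0"
    and V_nonneg: "\<forall>k l. V$k$l \<ge> 0" and z_pos: "\<forall>k. z$k > 0"
    and p0pos: "\<forall>k. p0$k > 0" and p'pos: "\<forall>k. p'$k > 0"
    and tight: "(C *v p0)$n0 = phat$n0" and p'c: "(C *v p')$n0 \<le> phat$n0"
    and \<alpha>_nonneg: "\<forall>j. \<alpha> j \<ge> 0"
    and \<alpha>_eq: "\<forall>j. \<alpha> j - (\<Sum>k\<in>UNIV. \<alpha> k * interference_share V z p0 k j) = C$n0$j * p0$j"
  shows "(\<Sum>k\<in>UNIV. \<alpha> k * (ln (SIR V z k p') - ln (SIR V z k p0))) \<le> 0"
proof -
  define B where "B = interference_share V z p0"
  define y where "y l = ln (p'$l / p0$l)" for l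
  have "(\<Sum>k\<in>UNIV. \<alpha> k * (ln (SIR V z k p') - ln (SIR V z k p0)))
        \<le> (\<Sum>k\<in>UNIV. \<alpha> k * (y k - (\<Sum>l\<in>UNIV. B k l * y l)))"
    unfolding B_def y_def using \<alpha>_nonneg
    by (intro sum_mono mult_left_mono ln_SIR_change_le[OF V_nonneg p0pos p'pos z_pos]) auto
  also have "\<dots> = (\<Sum>k\<in>UNIV. \<alpha> k * y k) - (\<Sum>k\<in>UNIV. \<Sum>l\<in>UNIV. \<alpha> k * B k l * y l)"
    by (simp add: right_diff_distrib sum_subtractf sum_distrib_left mult.assoc)
  also have "(\<Sum>k\<in>UNIV. \<Sum>l\<in>UNIV. \<alpha> k * B k l * y l) = (\<Sum>l\<in>UNIV. (\<Sum>k\<in>UNIV. \<alpha> k * B k l) * y l)"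
    by (subst sum.swap) (simp add: sum_distrib_right)
  also have "(\<Sum>k\<in>UNIV. \<alpha> k * y k) - (\<Sum>l\<in>UNIV. (\<Sum>k\<in>UNIV. \<alpha> k * B k l) * y l)
      = (\<Sum>l\<in>UNIV. (\<alpha> l - (\<Sum>k\<in>UNIV. \<alpha> k * B k l)) * y l)"
    by (simp add: left_diff_distrib sum_subtractf)
  also have "\<dots> = (\<Sum>l\<in>UNIV. C$n0$l * (p0$l * y l))"
    using \<alpha>_eq unfolding B_def by (simp add: mult.assoc)
  also have "\<dots> \<le> (\<Sum>l\<in>UNIV. C$n0$l * (p'$l - p0$l))"
  proof (intro sum_mono mult_left_mono)
    fix l
    have "ln (p'$l / p0$l) \<le> p'$l / p0$l - 1" using p0pos p'pos by (intro ln_le_minus_one) simp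
    hence "p0$l * y l \<le> p0$l * (p'$l / p0$l - 1)" unfolding y_def using p0pos by simp
    also have "\<dots> = p'$l - p0$l" using p0pos[rule_format, of l] by (simp add: field_simps)
    finally show "p0$l * y l \<le> p'$l - p0$l" .
  qed (use C_nonneg in blast)
  also have "\<dots> = (C *v p')$n0 - (C *v p0)$n0"
    unfolding matrix_vector_mult_nth by (simp add: right_diff_distrib sum_subtractf)
  also have "\<dots> \<le> 0" using tight p'c by simp
  finally show ?thesis .
qed

text \<open>Only-if direction: at a boundary point q the weights w_k = \<alpha>_k c_k, built
  from the dual weights \<alpha> and the supporting slopes c_k of \<open>ln \<circ> \<phi>\<inverse>\<close> at q_k,
  make q a maximiser of w \<bullet> x over the feasible region.\<close>
theorem boundary_point_weighted_maximiser:
  fixes \<phi> :: "real \<Rightarrow> real"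
    and C :: "real^'k^'n" and phat :: "real^'n"
    and V :: "real^'k^'k" and z \<gamma> q :: "real^'k"
  assumes C_nonneg: "\<forall>i j. C$i$j \<ge> 0"
    and phat_pos: "\<forall>i. phat$i > 0"
    and V_nonneg: "\<forall>k l. V$k$l \<ge> 0"
    and V_irr: "irreducible_matrix V"
    and z_pos: "\<forall>k. z$k > 0"
    and \<gamma>_pos: "\<forall>k. \<gamma>$k > 0"
    and sm: "strict_mono_on {0<..} \<phi>"
    and A3: "A3 \<phi>"
    and qB: "q \<in> feasible_boundary \<phi> C phat V z \<gamma>"
  shows "\<exists>w :: real^'k. (\<forall>k. w$k > 0) \<and>
            (\<forall>x \<in> feasible_region \<phi> C phat V z \<gamma>. w \<bullet> x \<le> w \<bullet> q)"
proof -
  obtain p0 n0 where p0P: "p0 \<in> Pplus C phat" and qd: "q = qos \<phi> V z \<gamma> p0"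
    and tight: "(C *v p0)$n0 = phat$n0"
    using qB unfolding feasible_boundary_def by blast
  have p0pos: "\<forall>k. p0$k > 0" using p0P by (simp add: Pplus_def)
  obtain \<alpha> where \<alpha>_pos: "\<forall>j. \<alpha> j > 0"
    and \<alpha>_eq: "\<forall>j. \<alpha> j - (\<Sum>k\<in>UNIV. \<alpha> k * interference_share V z p0 k j) = C$n0$j * p0$j"
    using tight_constraint_dual_weights[OF C_nonneg _ V_nonneg V_irr z_pos p0pos tight] phat_pos
    by blast
  define s where "s k = SIR V z k p0 / \<gamma>$k" for k
  have s_pos: "s k > 0" for k unfolding s_def using SIR_pos[OF V_nonneg p0pos z_pos] \<gamma>_pos by simp
  obtain c where c_pos: "\<forall>k. c k > 0"
    and c_slope: "\<forall>k. \<forall>t>0. c k * (\<phi> t - \<phi> (s k)) \<le> ln t - ln (s k)"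
    using A3_positive_support_slope[OF sm A3 s_pos] by metis
  define w :: "real^'k" where "w = (\<chi> k. \<alpha> k * c k)"
  have "w \<bullet> x \<le> w \<bullet> q" if xF: "x \<in> feasible_region \<phi> C phat V z \<gamma>" for x
  proof -
    obtain p' where p'P: "p' \<in> Pplus C phat" and xd: "x = qos \<phi> V z \<gamma> p'"
      using xF unfolding feasible_region_def by blast
    have p'pos: "\<forall>k. p'$k > 0" and p'c: "(C *v p')$n0 \<le> phat$n0" using p'P by (auto simp: Pplus_def)
    have slope: "c k * (x$k - q$k) \<le> ln (SIR V z k p') - ln (SIR V z k p0)" for k
    proof -
      have "SIR V z k p' / \<gamma>$k > 0" using SIR_pos[OF V_nonneg p'pos z_pos] \<gamma>_pos by simp
      hence "c k * (x$k - q$k) \<le> ln (SIR V z k p' / \<gamma>$k) - ln (s k)"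
        using c_slope unfolding xd qd qos_def s_def by simp
      thus ?thesis unfolding s_def using SIR_pos[OF V_nonneg p'pos z_pos, of k]
          SIR_pos[OF V_nonneg p0pos z_pos, of k] \<gamma>_pos by (simp add: ln_divide_pos)
    qed
    have "w \<bullet> x - w \<bullet> q = (\<Sum>k\<in>UNIV. \<alpha> k * (c k * (x$k - q$k)))"
      unfolding inner_vec_def w_def by (simp add: sum_subtractf[symmetric] algebra_simps)
    also have "\<dots> \<le> (\<Sum>k\<in>UNIV. \<alpha> k * (ln (SIR V z k p') - ln (SIR V z k p0)))"
      using \<alpha>_pos by (intro sum_mono mult_left_mono slope) (simp add: less_imp_le)
    also have "\<dots> \<le> 0"
      using \<alpha>_pos \<alpha>_eq
      by (intro weighted_ln_SIR_change_nonpos[OF C_nonneg V_nonneg z_pos p0pos p'pos tight p'c])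
        (auto intro: less_imp_le)
    finally show ?thesis by simp
  qed
  moreover have "\<forall>k. w$k > 0" unfolding w_def using \<alpha>_pos c_pos by simp
  ultimately show ?thesis by blast
qed


theorem lemma1:
  fixes \<phi> :: "real \<Rightarrow> real"
    and C :: "real^'k^'n" and phat :: "real^'n"
    and V :: "real^'k^'k" and z \<gamma> q :: "real^'k"
  assumes K2: "CARD('k) \<ge> 2"
    and C01: "\<forall>i j. C$i$j = 0 \<or> C$i$j = 1"
    and Ccol: "\<forall>j. \<exists>i. C$i$j = 1"
    and phat_pos: "\<forall>i. phat$i > 0"
    and V_nonneg: "\<forall>k l. V$k$l \<ge> 0"
    and V_diag: "\<forall>k. V$k$k = 0"
    and V_irr: "irreducible_matrix V"
    and z_pos: "\<forall>k. z$k > 0"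
    and \<gamma>_pos: "\<forall>k. \<gamma>$k > 0"
    and A2: "A2 \<phi>"
    and A3: "A3 \<phi>"
    and qF: "q \<in> feasible_region \<phi> C phat V z \<gamma>"
  shows "q \<in> feasible_boundary \<phi> C phat V z \<gamma> \<longleftrightarrow>
         (\<exists>w :: real^'k. (\<forall>k. w$k > 0) \<and>
            (\<forall>x \<in> feasible_region \<phi> C phat V z \<gamma>. w \<bullet> x \<le> w \<bullet> q))"
proof
  have C_nonneg: "\<forall>i j. C$i$j \<ge> 0" using C01 by (metis order_refl zero_le_one)
  have sm: "strict_mono_on {0<..} \<phi>" using A2 unfolding A2_def by blast
  show "\<exists>w :: real^'k. (\<forall>k. w$k > 0) \<and> (\<forall>x \<in> feasible_region \<phi> C phat V z \<gamma>. w \<bullet> x \<le> w \<bullet> q)"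
    if "q \<in> feasible_boundary \<phi> C phat V z \<gamma>"
    using boundary_point_weighted_maximiser[OF C_nonneg phat_pos V_nonneg V_irr z_pos \<gamma>_pos sm A3 that] .
  obtain p where "p \<in> Pplus C phat" "q = qos \<phi> V z \<gamma> p"
    using qF unfolding feasible_region_def by blast
  then show "q \<in> feasible_boundary \<phi> C phat V z \<gamma>"
    if "\<exists>w :: real^'k. (\<forall>k. w$k > 0) \<and> (\<forall>x \<in> feasible_region \<phi> C phat V z \<gamma>. w \<bullet> x \<le> w \<bullet> q)"
    using that weighted_maximiser_on_boundary[OF C_nonneg V_nonneg z_pos \<gamma>_pos sm] by blast
qed

end
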